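(* Let $q$ be a prime power, $M\geq2$ an integer with $(M,q)=1$, and $n\geq1$. Let $U_{t+1,n}$ denote the $n\times n$ matrix over $\mathbb{F}_q$ with $-1$ on the diagonal, $1$ on the superdiagonal and $0$ elsewhere. If $\alpha\in\mathrm{GL}(n,q)$ satisfies $\alpha^M=U_{t+1,n}$, then the semisimple part $\alpha_s$ of $\alpha$ (in its Jordan decomposition $\alpha=\alpha_s\alpha_u$) is a scalar matrix. *)

theory Defs
  imports "Jordan_Normal_Form.Matrix" "HOL-Computational_Algebra.Polynomial_Factorial" "HOL-Library.Cardinality"
begin

definition poly_mat :: "'a :: comm_ring_1 poly \<Rightarrow> 'a mat \<Rightarrow> 'a mat" where
  "poly_mat p A = foldr (\<lambda>c B. c \<cdot>\<^sub>m 1\<^sub>m (dim_row A) + A * B) (coeffs p)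
                        (0\<^sub>m (dim_row A) (dim_row A))"

text \<open>Semisimple: annihilated by a nonzero polynomial with distinct roots
  (over an algebraic closure), i.e. a polynomial coprime to its derivative;
  equivalently the minimal polynomial has distinct roots, i.e. the matrix is
  diagonalizable over the algebraic closure.\<close>
definition semisimple_mat :: "'a :: field mat \<Rightarrow> bool" where
  "semisimple_mat A \<longleftrightarrow> (\<exists>p. p \<noteq> 0 \<and> coprime p (pderiv p) \<and>
       poly_mat p A = 0\<^sub>m (dim_row A) (dim_row A))"

definition unipotent_mat :: "'a :: field mat \<Rightarrow> bool" where
  "unipotent_mat A \<longleftrightarrow> (\<exists>k. (A - 1\<^sub>m (dim_row A)) ^\<^sub>m k = 0\<^sub>m (dim_row A) (dim_row A))"

definition U_mat :: "nat \<Rightarrow> 'a :: comm_ring_1 mat" where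
  "U_mat n = mat n n (\<lambda>(i,j). if i = j then -1 else if j = i + 1 then 1 else 0)"

definition scalar_mat :: "'a :: comm_ring_1 mat \<Rightarrow> bool" where
  "scalar_mat A \<longleftrightarrow> (\<exists>c. A = c \<cdot>\<^sub>m 1\<^sub>m (dim_row A))"

end

theory Submission
  imports Defs "Jordan_Normal_Form.Determinant"
begin

(* The semisimple part s commutes with alpha, hence with alpha^M = U, which is -1 plus the
   nilpotent shift. Commuting with the shift forces s to be constant along diagonals and zero
   below the main one; in particular s is upper triangular with constant diagonal c. A
   polynomial p coprime to p' that annihilates s then vanishes at c, so p = (x - c) g with
   g(c) nonzero. Now g(s) is upper triangular with diagonal g(c), hence invertible, and
   (s - c) g(s) = p(s) = 0 forces s = c. *)

lemma poly_mat_carrier: "A \<in> carrier_mat n n \<Longrightarrow> poly_mat p A \<in> carrier_mat n n"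
proof -
  assume A: "A \<in> carrier_mat n n"
  have "foldr (\<lambda>c B. c \<cdot>\<^sub>m 1\<^sub>m n + A * B) xs (0\<^sub>m n n) \<in> carrier_mat n n" for xs
    using A by (induction xs) auto
  then show ?thesis unfolding poly_mat_def using A by simp
qed

lemma poly_mat_0 [simp]: "A \<in> carrier_mat n n \<Longrightarrow> poly_mat 0 A = 0\<^sub>m n n"
  unfolding poly_mat_def by auto

lemma poly_mat_pCons:
  assumes "A \<in> carrier_mat n n"
  shows "poly_mat (pCons a p) A = a \<cdot>\<^sub>m 1\<^sub>m n + A * poly_mat p A"
proof (cases "a = 0 \<and> p = 0")
  case True
  then show ?thesis using assms by auto
next
  case False
  then have "coeffs (pCons a p) = a # coeffs p"
    by (auto simp: coeffs_pCons_eq_cCons cCons_def)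
  then show ?thesis using assms unfolding poly_mat_def by simp
qed

lemma poly_mat_add:
  assumes A: "A \<in> carrier_mat n n"
  shows "poly_mat (p + q) A = poly_mat p A + poly_mat q A"
proof (induction p q rule: poly_induct2)
  case 0
  then show ?case using A by simp
next
  case (pCons a p b q)
  have PQ: "poly_mat p A \<in> carrier_mat n n" "poly_mat q A \<in> carrier_mat n n"
    using A by (auto intro: poly_mat_carrier)
  have "poly_mat (pCons a p + pCons b q) A
      = (a + b) \<cdot>\<^sub>m 1\<^sub>m n + A * (poly_mat p A + poly_mat q A)"
    by (simp add: poly_mat_pCons[OF A] pCons)
  also have "\<dots> = (a \<cdot>\<^sub>m 1\<^sub>m n + A * poly_mat p A) + (b \<cdot>\<^sub>m 1\<^sub>m n + A * poly_mat q A)"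
    using A PQ by (simp add: mult_add_distrib_mat add_smult_distrib_right_mat)
      (auto simp: assoc_add_mat comm_add_mat)
  finally show ?case by (simp add: poly_mat_pCons[OF A])
qed

lemma poly_mat_smult:
  assumes A: "A \<in> carrier_mat n n"
  shows "poly_mat (smult c p) A = c \<cdot>\<^sub>m poly_mat p A"
proof (induction p)
  case 0
  then show ?case using A by simp
next
  case (pCons a p)
  have P: "poly_mat p A \<in> carrier_mat n n" using A by (rule poly_mat_carrier)
  have "c \<cdot>\<^sub>m (a \<cdot>\<^sub>m 1\<^sub>m n) = (c * a) \<cdot>\<^sub>m (1\<^sub>m n :: 'a mat)"
    by (rule eq_matI) auto
  then have "c \<cdot>\<^sub>m (a \<cdot>\<^sub>m 1\<^sub>m n + A * poly_mat p A) = (c * a) \<cdot>\<^sub>m 1\<^sub>m n + A * (c \<cdot>\<^sub>m poly_mat p A)"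
    using A P by (simp add: add_smult_distrib_left_mat[of _ n n] mult_smult_distrib)
  then show ?case by (simp add: poly_mat_pCons[OF A] pCons)
qed

lemma poly_mat_pCons_0:
  assumes A: "A \<in> carrier_mat n n"
  shows "poly_mat (pCons 0 p) A = A * poly_mat p A"
  using A poly_mat_carrier[OF A, of p] by (simp add: poly_mat_pCons) (rule eq_matI, auto)

lemma poly_mat_mult:
  assumes A: "A \<in> carrier_mat n n"
  shows "poly_mat (p * q) A = poly_mat p A * poly_mat q A"
proof (induction p)
  case 0
  then show ?case using A poly_mat_carrier[OF A, of q] by simp
next
  case (pCons a p)
  have P: "poly_mat p A \<in> carrier_mat n n" and Q: "poly_mat q A \<in> carrier_mat n n"
    using A by (auto intro: poly_mat_carrier)
  have "poly_mat (pCons a p * q) A = poly_mat (smult a q + pCons 0 (p * q)) A"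
    by simp
  also have "\<dots> = a \<cdot>\<^sub>m poly_mat q A + A * (poly_mat p A * poly_mat q A)"
    using A P Q by (simp add: poly_mat_add poly_mat_smult poly_mat_pCons_0 pCons)
  also have "\<dots> = (a \<cdot>\<^sub>m 1\<^sub>m n + A * poly_mat p A) * poly_mat q A"
    using A P Q by (simp add: add_mult_distrib_mat[of _ n n] mult_smult_assoc_mat[of _ n n])
  finally show ?case by (simp add: poly_mat_pCons[OF A])
qed

lemma poly_mat_linear:
  assumes "A \<in> carrier_mat n n"
  shows "poly_mat [:-c, 1:] A = A - c \<cdot>\<^sub>m 1\<^sub>m n"
  using assms by (simp add: poly_mat_pCons) (auto simp: minus_add_uminus_mat comm_add_mat)

lemma upper_triangular_mult:
  assumes A: "A \<in> carrier_mat n n" and B: "B \<in> carrier_mat n n"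
    and "upper_triangular A" "upper_triangular B"
  shows "upper_triangular (A * B)"
proof
  fix i j assume ji: "j < i" and "i < dim_row (A * B)"
  then have i: "i < n" using A by simp
  have "A $$ (i, k) * B $$ (k, j) = 0" if "k < n" for k
    using assms ji that i by (cases "k < i") (auto simp: upper_triangularD)
  then show "(A * B) $$ (i, j) = 0"
    using A B i ji by (simp add: scalar_prod_def)
qed

lemma diag_mult_upper_triangular:
  assumes A: "A \<in> carrier_mat n n" and B: "B \<in> carrier_mat n n"
    and "upper_triangular A" "upper_triangular B" and i: "i < n"
  shows "(A * B) $$ (i, i) = A $$ (i, i) * B $$ (i, i)"
proof -
  have "A $$ (i, k) * B $$ (k, i) = (if k = i then A $$ (i, i) * B $$ (i, i) else 0)" if "k < n" for k
    using assms that by (cases k i rule: linorder_cases) (auto simp: upper_triangularD)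
  then have "(\<Sum>k = 0..<n. A $$ (i, k) * B $$ (k, i))
      = (\<Sum>k = 0..<n. if k = i then A $$ (i, i) * B $$ (i, i) else 0)"
    by (intro sum.cong) auto
  then show ?thesis
    using A B i by (simp add: scalar_prod_def)
qed

lemma upper_triangular_poly_mat:
  assumes A: "A \<in> carrier_mat n n" and "upper_triangular A"
  shows "upper_triangular (poly_mat p A)"
proof (induction p)
  case 0
  then show ?case using A by simp
next
  case (pCons a p)
  have P: "poly_mat p A \<in> carrier_mat n n" using A by (rule poly_mat_carrier)
  have "upper_triangular (A * poly_mat p A)"
    using upper_triangular_mult[OF A P] assms pCons by blast
  then show ?case
    using A P by (auto simp: poly_mat_pCons upper_triangularD intro!: upper_triangularI)
qed

lemma diag_poly_mat_upper_triangular: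
  assumes A: "A \<in> carrier_mat n n" and "upper_triangular A" and i: "i < n"
  shows "poly_mat p A $$ (i, i) = poly p (A $$ (i, i))"
proof (induction p)
  case 0
  then show ?case using A i by simp
next
  case (pCons a p)
  have P: "poly_mat p A \<in> carrier_mat n n" using A by (rule poly_mat_carrier)
  have "(A * poly_mat p A) $$ (i, i) = A $$ (i, i) * poly p (A $$ (i, i))"
    using diag_mult_upper_triangular[OF A P assms(2) upper_triangular_poly_mat[OF assms(1,2)] i] pCons
    by simp
  then show ?case
    using A P i by (simp add: poly_mat_pCons)
qed

lemma coprime_pderiv_root_decomp:
  fixes p :: "'a :: field poly"
  assumes coprime: "coprime p (pderiv p)" and root: "poly p c = 0"
  obtains g where "p = [:-c, 1:] * g" and "poly g c \<noteq> 0"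
proof -
  obtain g where g: "p = [:-c, 1:] * g"
    using root by (metis dvdE poly_eq_0_iff_dvd)
  have "poly (pderiv p) c \<noteq> 0"
  proof
    assume "poly (pderiv p) c = 0"
    then have "[:-c, 1:] dvd pderiv p" and "[:-c, 1:] dvd p"
      using root by (simp_all add: poly_eq_0_iff_dvd)
    then have "is_unit [:-c, 1:]"
      using coprime coprime_common_divisor by blast
    then show False by (simp add: is_unit_iff_degree)
  qed
  moreover have "poly (pderiv p) c = poly g c"
    by (simp only: g pderiv_mult) (simp add: pderiv_pCons)
  ultimately show ?thesis using that g by simp
qed

lemma mult_eq_0_mat_det_nonzero:
  fixes A G :: "'a :: field mat"
  assumes A: "A \<in> carrier_mat n n" and G: "G \<in> carrier_mat n n"
    and "det G \<noteq> 0" and AG: "A * G = 0\<^sub>m n n"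
  shows "A = 0\<^sub>m n n"
proof -
  obtain B where B: "B \<in> carrier_mat n n" "G * B = 1\<^sub>m n"
    using det_non_zero_imp_unit[OF G \<open>det G \<noteq> 0\<close>, of undefined]
    unfolding Units_def ring_mat_def by auto
  have "A = A * (G * B)" using A B by simp
  also have "\<dots> = (A * G) * B" using A G B by simp
  finally show ?thesis using AG B by simp
qed

lemma semisimple_upper_triangular_constant_diag_imp_scalar:
  fixes s :: "'a :: field mat"
  assumes s: "s \<in> carrier_mat n n" and ut: "upper_triangular s"
    and diag: "\<And>i. i < n \<Longrightarrow> s $$ (i, i) = c" and "semisimple_mat s"
  shows "s = c \<cdot>\<^sub>m 1\<^sub>m n"
proof (cases "n = 0")
  case True
  then show ?thesis using s by (intro eq_matI) auto
next
  case False
  obtain p where cop: "coprime p (pderiv p)" and p_s: "poly_mat p s = 0\<^sub>m n n"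
    using \<open>semisimple_mat s\<close> s unfolding semisimple_mat_def by auto
  have "poly p c = 0"
    using diag_poly_mat_upper_triangular[OF s ut, of 0 p] diag[of 0] p_s False by simp
  then obtain g where p: "p = [:-c, 1:] * g" and "poly g c \<noteq> 0"
    using coprime_pderiv_root_decomp[OF cop] by blast
  let ?G = "poly_mat g s"
  have G: "?G \<in> carrier_mat n n" using s by (rule poly_mat_carrier)
  have det: "det ?G \<noteq> 0"
    using upper_triangular_imp_det_eq_0_iff[OF G upper_triangular_poly_mat[OF s ut]]
      diag_poly_mat_upper_triangular[OF s ut] diag \<open>poly g c \<noteq> 0\<close> G
    by (auto simp: diag_mat_def)
  have TG: "(s - c \<cdot>\<^sub>m 1\<^sub>m n) * ?G = 0\<^sub>m n n"
    using p_s unfolding p poly_mat_mult[OF s] poly_mat_linear[OF s] .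
  have T: "s - c \<cdot>\<^sub>m 1\<^sub>m n = 0\<^sub>m n n"
    by (rule mult_eq_0_mat_det_nonzero[OF _ G det TG]) (use s in auto)
  show ?thesis
  proof (rule eq_matI)
    fix i j assume "i < dim_row (c \<cdot>\<^sub>m 1\<^sub>m n)" "j < dim_col (c \<cdot>\<^sub>m (1\<^sub>m n :: 'a mat))"
    then have ij: "i < n" "j < n" by auto
    then have "(s - c \<cdot>\<^sub>m 1\<^sub>m n) $$ (i, j) = 0" by (simp add: T)
    then show "s $$ (i, j) = (c \<cdot>\<^sub>m 1\<^sub>m n) $$ (i, j)" using ij s by simp
  qed (use s in auto)
qed

lemma mult_U_mat_entry:
  fixes s :: "'a :: comm_ring_1 mat"
  assumes s: "s \<in> carrier_mat n n" and i: "i < n" and j: "j < n"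
  shows "(s * U_mat n) $$ (i, j) = - s $$ (i, j) + (if j = 0 then 0 else s $$ (i, j - 1))"
proof -
  have "(s * U_mat n) $$ (i, j)
      = (\<Sum>k = 0..<n. s $$ (i, k) * (if k = j then -1 else if j = k + 1 then 1 else 0))"
    using s i j by (simp add: U_mat_def scalar_prod_def)
  also have "\<dots> = (\<Sum>k = 0..<n. (if k = j then - s $$ (i, j) else 0)
                   + (if k = j - 1 \<and> j \<noteq> 0 then s $$ (i, j - 1) else 0))"
    by (rule sum.cong) auto
  also have "\<dots> = - s $$ (i, j) + (if j = 0 then 0 else s $$ (i, j - 1))"
    using j by (simp add: sum.distrib sum.delta)
  finally show ?thesis .
qed

lemma U_mat_mult_entry:
  fixes s :: "'a :: comm_ring_1 mat"
  assumes s: "s \<in> carrier_mat n n" and i: "i < n" and j: "j < n"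
  shows "(U_mat n * s) $$ (i, j) = - s $$ (i, j) + (if i + 1 < n then s $$ (i + 1, j) else 0)"
proof -
  have "(U_mat n * s) $$ (i, j)
      = (\<Sum>k = 0..<n. (if i = k then -1 else if k = i + 1 then 1 else 0) * s $$ (k, j))"
    using s i j by (simp add: U_mat_def scalar_prod_def)
  also have "\<dots> = (\<Sum>k = 0..<n. (if k = i then - s $$ (i, j) else 0)
                   + (if k = i + 1 then s $$ (i + 1, j) else 0))"
    by (rule sum.cong) auto
  also have "\<dots> = - s $$ (i, j) + (if i + 1 < n then s $$ (i + 1, j) else 0)"
    using i by (simp add: sum.distrib sum.delta)
  finally show ?thesis .
qed

lemma commute_U_mat_shift:
  fixes s :: "'a :: comm_ring_1 mat"
  assumes s: "s \<in> carrier_mat n n" and comm: "s * U_mat n = U_mat n * s"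
    and "i + 1 < n" and "j < n"
  shows "s $$ (i + 1, j) = (if j = 0 then 0 else s $$ (i, j - 1))"
  using arg_cong[OF comm, of "\<lambda>X. X $$ (i, j)"] assms
    mult_U_mat_entry[OF s, of i j] U_mat_mult_entry[OF s, of i j]
  by simp

lemma commute_U_mat_imp_upper_triangular:
  fixes s :: "'a :: comm_ring_1 mat"
  assumes s: "s \<in> carrier_mat n n" and comm: "s * U_mat n = U_mat n * s"
  shows "upper_triangular s"
proof -
  have "s $$ (i, j) = 0" if "j < i" "i < n" for i j
    using that
  proof (induction j arbitrary: i)
    case 0
    then show ?case
      using commute_U_mat_shift[OF s comm, of "i - 1" 0] by simp
  next
    case (Suc j)
    then have "s $$ (i, Suc j) = s $$ (i - 1, j)"
      using commute_U_mat_shift[OF s comm, of "i - 1" "Suc j"] by simp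
    then show ?case using Suc by simp
  qed
  then show ?thesis using s by (intro upper_triangularI) simp
qed

lemma commute_U_mat_diag:
  fixes s :: "'a :: comm_ring_1 mat"
  assumes s: "s \<in> carrier_mat n n" and comm: "s * U_mat n = U_mat n * s"
  shows "i < n \<Longrightarrow> s $$ (i, i) = s $$ (0, 0)"
proof (induction i)
  case (Suc i)
  then show ?case using commute_U_mat_shift[OF s comm, of i "Suc i"] by simp
qed simp

lemma commute_pow_mat:
  assumes A: "A \<in> carrier_mat n n" and B: "B \<in> carrier_mat n n" and comm: "A * B = B * A"
  shows "A * B ^\<^sub>m k = B ^\<^sub>m k * A"
proof (induction k)
  case 0
  then show ?case using A B by simp
next
  case (Suc k)
  have Bk: "B ^\<^sub>m k \<in> carrier_mat n n" using B by simp
  have "A * B ^\<^sub>m Suc k = (A * B ^\<^sub>m k) * B"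
    using A B Bk by (simp add: assoc_mult_mat[of A n n _ n B n])
  also have "\<dots> = B ^\<^sub>m k * (A * B)"
    using A B Bk Suc by (simp add: assoc_mult_mat[of _ n n A n B n])
  also have "\<dots> = B ^\<^sub>m Suc k * A"
    using A B Bk comm by (simp add: assoc_mult_mat[of _ n n B n A n])
  finally show ?case .
qed

theorem lemma7p2:
  fixes \<alpha> :: "'a :: {finite, field} mat" and s u :: "'a mat" and M n :: nat
  assumes "M \<ge> 2" and "coprime M CARD('a)" and "n \<ge> 1"
    and "\<alpha> \<in> carrier_mat n n" and "invertible_mat \<alpha>"
    and "\<alpha> ^\<^sub>m M = U_mat n"
    and "s \<in> carrier_mat n n" and "u \<in> carrier_mat n n"
    and "\<alpha> = s * u" and "s * u = u * s"
    and "semisimple_mat s" and "unipotent_mat u"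
  shows "scalar_mat s"
proof -
  note \<alpha> = assms(4) and s = assms(7) and u = assms(8)
  have "\<alpha> * s = s * (u * s)"
    using s u by (simp add: assms(9) assoc_mult_mat[of s n n u n s n])
  then have "s * \<alpha> = \<alpha> * s"
    using assms(9,10) by simp
  then have comm: "s * U_mat n = U_mat n * s"
    using commute_pow_mat[OF s \<alpha>, of M] assms(6) by simp
  have "s = s $$ (0, 0) \<cdot>\<^sub>m 1\<^sub>m n"
    using semisimple_upper_triangular_constant_diag_imp_scalar[OF s
        commute_U_mat_imp_upper_triangular[OF s comm] commute_U_mat_diag[OF s comm] assms(11)] .
  then show ?thesis
    using s unfolding scalar_mat_def by auto
qed

end
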